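(* For any connected graphs $G$ and $H$, $\gamma_P(G \Box H) \le \min\{\gamma(G)Z(H),\ \gamma(H)Z(G)\}$.
   Context: $\gamma(G)$ is the domination number (minimum size of $D\subseteq V(G)$ with $N[D]=V(G)$). Zero forcing: starting from an observed set $Z$, repeatedly any vertex that is the only unobserved neighbor of some observed vertex becomes observed; $Z(G)$ is the minimum size of a set that eventually observes all vertices. Power domination: for $S\subseteq V(G)$, first all vertices of $S$ and their neighbors are observed, then the zero forcing rule is applied repeatedly; $\gamma_P(G)$ is the minimum size of an $S$ that eventually observes all vertices. $G\Box H$ is the Cartesian product: vertex set $V(G)\times V(H)$, with $(g_1,h_1)\sim(g_2,h_2)$ iff ($g_1=g_2$ and $h_1h_2\in E(H)$) or ($h_1=h_2$ and $g_1g_2\in E(G)$). *)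

theory Defs
  imports Main
begin

definition graph :: "'a set \<Rightarrow> ('a \<Rightarrow> 'a \<Rightarrow> bool) \<Rightarrow> bool" where
  "graph V E \<longleftrightarrow> finite V \<and> (\<forall>u v. E u v \<longrightarrow> u \<in> V \<and> v \<in> V)
     \<and> (\<forall>u v. E u v \<longrightarrow> E v u) \<and> (\<forall>v. \<not> E v v)"

definition connected_graph :: "'a set \<Rightarrow> ('a \<Rightarrow> 'a \<Rightarrow> bool) \<Rightarrow> bool" where
  "connected_graph V E \<longleftrightarrow> V \<noteq> {} \<and> (\<forall>u\<in>V. \<forall>v\<in>V. E\<^sup>*\<^sup>* u v)"

definition closed_nbhd :: "('a \<Rightarrow> 'a \<Rightarrow> bool) \<Rightarrow> 'a set \<Rightarrow> 'a set" where
  "closed_nbhd E D = D \<union> {w. \<exists>v\<in>D. E v w}"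

definition dominating_set :: "'a set \<Rightarrow> ('a \<Rightarrow> 'a \<Rightarrow> bool) \<Rightarrow> 'a set \<Rightarrow> bool" where
  "dominating_set V E D \<longleftrightarrow> D \<subseteq> V \<and> closed_nbhd E D = V"

definition domination_number :: "'a set \<Rightarrow> ('a \<Rightarrow> 'a \<Rightarrow> bool) \<Rightarrow> nat" where
  "domination_number V E = (LEAST k. \<exists>D. dominating_set V E D \<and> card D = k)"

definition force_step :: "'a set \<Rightarrow> ('a \<Rightarrow> 'a \<Rightarrow> bool) \<Rightarrow> 'a set \<Rightarrow> 'a set \<Rightarrow> bool" where
  "force_step V E S S' \<longleftrightarrow> (\<exists>v\<in>S. \<exists>w. {u \<in> V. E v u} - S = {w} \<and> S' = insert w S)"

definition zero_forcing_set :: "'a set \<Rightarrow> ('a \<Rightarrow> 'a \<Rightarrow> bool) \<Rightarrow> 'a set \<Rightarrow> bool" where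
  "zero_forcing_set V E Z \<longleftrightarrow> Z \<subseteq> V \<and> (force_step V E)\<^sup>*\<^sup>* Z V"

definition zero_forcing_number :: "'a set \<Rightarrow> ('a \<Rightarrow> 'a \<Rightarrow> bool) \<Rightarrow> nat" where
  "zero_forcing_number V E = (LEAST k. \<exists>Z. zero_forcing_set V E Z \<and> card Z = k)"

definition power_dominating_set :: "'a set \<Rightarrow> ('a \<Rightarrow> 'a \<Rightarrow> bool) \<Rightarrow> 'a set \<Rightarrow> bool" where
  "power_dominating_set V E S \<longleftrightarrow> S \<subseteq> V \<and> (force_step V E)\<^sup>*\<^sup>* (closed_nbhd E S) V"

definition power_domination_number :: "'a set \<Rightarrow> ('a \<Rightarrow> 'a \<Rightarrow> bool) \<Rightarrow> nat" where
  "power_domination_number V E = (LEAST k. \<exists>S. power_dominating_set V E S \<and> card S = k)"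

definition cart_edges :: "('a \<Rightarrow> 'a \<Rightarrow> bool) \<Rightarrow> ('b \<Rightarrow> 'b \<Rightarrow> bool) \<Rightarrow> ('a \<times> 'b) \<Rightarrow> ('a \<times> 'b) \<Rightarrow> bool" where
  "cart_edges E F x y \<longleftrightarrow> (fst x = fst y \<and> F (snd x) (snd y)) \<or> (snd x = snd y \<and> E (fst x) (fst y))"

end

theory Submission
  imports Defs
begin

text \<open>If D dominates G and Z is a zero forcing set of H, then the closed neighbourhood of
D \<times> Z in G \<box> H contains every H-fibre copy V \<times> Z. Each H-force h \<rightarrow> w is simulated in
G \<box> H by the forces (g, h) \<rightarrow> (g, w), one for every g: once V \<times> Y is observed, the only
neighbour of (g, h) that can be unobserved is (g, w). Hence D \<times> Z power dominates G \<box> H,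
giving \<gamma>(G) Z(H); the other bound follows by the symmetry G \<box> H \<cong> H \<box> G.\<close>

lemma card_LEAST_attained:
  assumes "P A"
  shows "\<exists>B. P B \<and> card B = (LEAST k. \<exists>B. P B \<and> card B = k)"
  using assms LeastI_ex[of "\<lambda>k. \<exists>B. P B \<and> card B = k"] by blast

lemma LEAST_card_le:
  assumes "P A"
  shows "(LEAST k. \<exists>B. P B \<and> card B = k) \<le> card A"
  using assms by (blast intro: Least_le)

lemma force_steps_Un:
  assumes "(force_step V E)\<^sup>*\<^sup>* A C"
  shows "(force_step V E)\<^sup>*\<^sup>* (A \<union> B) (C \<union> B)"
  using assms
proof (induction rule: rtranclp_induct)
  case base
  then show ?case by simp
next
  case (step C C')
  from step.hyps(2) obtain v w where v: "v \<in> C" and vw: "{u \<in> V. E v u} - C = {w}"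
    and C': "C' = insert w C" unfolding force_step_def by blast
  show ?case
  proof (cases "w \<in> B")
    case True
    then have "C' \<union> B = C \<union> B" using C' by auto
    then show ?thesis using step.IH by simp
  next
    case False
    then have "{u \<in> V. E v u} - (C \<union> B) = {w}" using vw by blast
    then have "force_step V E (C \<union> B) (C' \<union> B)"
      unfolding force_step_def using v C' by blast
    with step.IH show ?thesis by (rule rtranclp.rtrancl_into_rtrancl)
  qed
qed

lemma force_steps_superset:
  assumes "(force_step V E)\<^sup>*\<^sup>* A V" and "A \<subseteq> B" and "B \<subseteq> V"
  shows "(force_step V E)\<^sup>*\<^sup>* B V"
  using force_steps_Un[OF assms(1), of B] assms(2,3) by (simp add: Un_absorb1 Un_absorb2)

lemma closed_nbhd_image:
  assumes "bij f" and "\<And>x y. E' (f x) (f y) \<longleftrightarrow> E x y"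
  shows "closed_nbhd E' (f ` S) = f ` closed_nbhd E S"
proof -
  have "{w. \<exists>v\<in>f ` S. E' v w} = f ` {w. \<exists>v\<in>S. E v w}"
  proof (intro equalityI subsetI)
    fix w
    assume "w \<in> {w. \<exists>v\<in>f ` S. E' v w}"
    then obtain v where v: "v \<in> S" "E' (f v) w" by blast
    have w: "w = f (inv f w)"
      using assms(1) by (simp add: bij_is_surj surj_f_inv_f)
    then have "E v (inv f w)" using v(2) assms(2) by metis
    with v(1) w show "w \<in> f ` {w. \<exists>v\<in>S. E v w}" by blast
  qed (use assms(2) in auto)
  then show ?thesis unfolding closed_nbhd_def by (simp add: image_Un)
qed

lemma force_step_image:
  assumes "bij f" and "\<And>x y. E' (f x) (f y) \<longleftrightarrow> E x y" and "force_step V E C C'"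
  shows "force_step (f ` V) E' (f ` C) (f ` C')"
proof -
  from assms(3) obtain v w where v: "v \<in> C" and vw: "{u \<in> V. E v u} - C = {w}"
    and C': "C' = insert w C" unfolding force_step_def by blast
  have inj: "inj f" using assms(1) by (rule bij_is_inj)
  have "{u \<in> f ` V. E' (f v) u} = f ` {u \<in> V. E v u}"
    using assms(2) by auto
  then have "{u \<in> f ` V. E' (f v) u} - f ` C = {f w}"
    using vw by (simp add: image_set_diff[OF inj, symmetric])
  then show ?thesis
    unfolding force_step_def using v C' by blast
qed

lemma force_steps_image:
  assumes "bij f" and "\<And>x y. E' (f x) (f y) \<longleftrightarrow> E x y" and "(force_step V E)\<^sup>*\<^sup>* C C'"
  shows "(force_step (f ` V) E')\<^sup>*\<^sup>* (f ` C) (f ` C')"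
  using assms(3)
proof induction
  case (step C' C'')
  have "force_step (f ` V) E' (f ` C') (f ` C'')"
    using force_step_image[where E = E and E' = E', OF assms(1,2) step.hyps(2)] .
  with step.IH show ?case by (rule rtranclp.rtrancl_into_rtrancl)
qed simp

lemma power_domination_number_image_le:
  assumes "power_dominating_set V E S\<^sub>0" and "bij f" and "\<And>x y. E' (f x) (f y) \<longleftrightarrow> E x y"
  shows "power_domination_number (f ` V) E' \<le> power_domination_number V E"
proof -
  obtain S where S: "power_dominating_set V E S" "card S = power_domination_number V E"
    using card_LEAST_attained[of "power_dominating_set V E", OF assms(1)]
    unfolding power_domination_number_def by blast
  have "power_dominating_set (f ` V) E' (f ` S)"
    using S(1) force_steps_image[where E = E and E' = E', OF assms(2,3), of V "closed_nbhd E S" V]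
    unfolding power_dominating_set_def closed_nbhd_image[where E = E and E' = E', OF assms(2,3)] by blast
  then have "power_domination_number (f ` V) E' \<le> card (f ` S)"
    unfolding power_domination_number_def by (rule LEAST_card_le)
  also have "card (f ` S) = card S"
    using assms(2) by (metis bij_is_inj card_image inj_on_subset subset_UNIV)
  finally show ?thesis using S(2) by simp
qed

lemma cart_edges_swap:
  "cart_edges E F (prod.swap x) (prod.swap y) \<longleftrightarrow> cart_edges F E x y"
  unfolding cart_edges_def by auto

lemma closed_nbhd_cart_subset:
  assumes "graph V E" and "graph W F" and "S \<subseteq> V \<times> W"
  shows "closed_nbhd (cart_edges E F) S \<subseteq> V \<times> W"
  using assms unfolding graph_def closed_nbhd_def cart_edges_def by fastforce

lemma power_dominating_set_cart_self:
  assumes "graph V E" and "graph W F"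
  shows "power_dominating_set (V \<times> W) (cart_edges E F) (V \<times> W)"
proof -
  have "closed_nbhd (cart_edges E F) (V \<times> W) = V \<times> W"
    using closed_nbhd_cart_subset[OF assms order_refl] unfolding closed_nbhd_def by blast
  then show ?thesis unfolding power_dominating_set_def by simp
qed

lemma power_domination_number_cart_commute:
  assumes "graph V E" and "graph W F"
  shows "power_domination_number (V \<times> W) (cart_edges E F)
           \<le> power_domination_number (W \<times> V) (cart_edges F E)"
  using power_domination_number_image_le[OF power_dominating_set_cart_self[OF assms(2,1)]
      bij_swap cart_edges_swap]
  by (simp add: product_swap)

lemma cart_force_step:
  assumes "{u \<in> W. F h u} - Y = {w}" and "h \<in> Y" and "g \<in> V"
    and "V \<times> Y \<subseteq> X" and "(g, w) \<notin> X"
  shows "force_step (V \<times> W) (cart_edges E F) X (insert (g, w) X)"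
proof -
  have "{u \<in> V \<times> W. cart_edges E F (g, h) u} - X = {(g, w)}"
  proof (intro equalityI subsetI)
    fix u
    assume u: "u \<in> {u \<in> V \<times> W. cart_edges E F (g, h) u} - X"
    then have "fst u = g" "F h (snd u)" "snd u \<notin> Y"
      using assms(2,4) unfolding cart_edges_def by (auto simp: mem_Times_iff)
    then show "u \<in> {(g, w)}"
      using u assms(1) by (cases u) auto
  qed (use assms in \<open>auto simp: cart_edges_def\<close>)
  moreover have "(g, h) \<in> X" using assms(2-4) by blast
  ultimately show ?thesis unfolding force_step_def by blast
qed

lemma cart_force_steps_fibre:
  assumes "{u \<in> W. F h u} - Y = {w}" and "h \<in> Y" and "finite A" and "A \<subseteq> V"
  shows "(force_step (V \<times> W) (cart_edges E F))\<^sup>*\<^sup>* (V \<times> Y) (V \<times> Y \<union> A \<times> {w})"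
  using assms(3,4)
proof (induction A rule: finite_induct)
  case (insert g A)
  have "w \<notin> Y" using assms(1) by blast
  then have "force_step (V \<times> W) (cart_edges E F) (V \<times> Y \<union> A \<times> {w})
      (insert (g, w) (V \<times> Y \<union> A \<times> {w}))"
    using insert.hyps(2) insert.prems
    by (intro cart_force_step[where F = F and W = W, OF assms(1,2)]) auto
  with insert.IH insert.prems show ?case
    by (simp add: rtranclp.rtrancl_into_rtrancl)
qed simp

lemma cart_force_steps_lift:
  assumes "finite V" and "(force_step W F)\<^sup>*\<^sup>* Y Y'"
  shows "(force_step (V \<times> W) (cart_edges E F))\<^sup>*\<^sup>* (V \<times> Y) (V \<times> Y')"
  using assms(2)
proof induction
  case (step Y' Y'')
  then obtain h w where h: "h \<in> Y'" and hw: "{u \<in> W. F h u} - Y' = {w}"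
    and Y'': "Y'' = insert w Y'"
    unfolding force_step_def by blast
  have "(force_step (V \<times> W) (cart_edges E F))\<^sup>*\<^sup>* (V \<times> Y') (V \<times> Y' \<union> V \<times> {w})"
    using cart_force_steps_fibre[where F = F and W = W, OF hw h assms(1) order_refl] .
  also have "V \<times> Y' \<union> V \<times> {w} = V \<times> Y''"
    using Y'' by blast
  finally have "(force_step (V \<times> W) (cart_edges E F))\<^sup>*\<^sup>* (V \<times> Y') (V \<times> Y'')" .
  with step.IH show ?case by (rule rtranclp_trans)
qed simp

lemma closed_nbhd_cart_times:
  assumes "dominating_set V E D"
  shows "V \<times> Z \<subseteq> closed_nbhd (cart_edges E F) (D \<times> Z)"
proof (intro subsetI)
  fix x
  assume "x \<in> V \<times> Z"
  then obtain g h where x: "x = (g, h)" "h \<in> Z" and "g \<in> closed_nbhd E D"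
    using assms unfolding dominating_set_def by blast
  then consider "g \<in> D" | d where "d \<in> D" "E d g"
    unfolding closed_nbhd_def by blast
  then show "x \<in> closed_nbhd (cart_edges E F) (D \<times> Z)"
    by cases (use x in \<open>auto simp: closed_nbhd_def cart_edges_def\<close>)
qed

lemma power_dominating_set_cart_times:
  assumes "graph V E" and "graph W F"
    and "dominating_set V E D" and "zero_forcing_set W F Z"
  shows "power_dominating_set (V \<times> W) (cart_edges E F) (D \<times> Z)"
proof -
  have sub: "D \<times> Z \<subseteq> V \<times> W"
    using assms(3,4) unfolding dominating_set_def zero_forcing_set_def by blast
  have "finite V" using assms(1) unfolding graph_def by blast
  then have "(force_step (V \<times> W) (cart_edges E F))\<^sup>*\<^sup>* (V \<times> Z) (V \<times> W)"
    using assms(4) unfolding zero_forcing_set_def by (blast intro: cart_force_steps_lift)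
  then have "(force_step (V \<times> W) (cart_edges E F))\<^sup>*\<^sup>*
      (closed_nbhd (cart_edges E F) (D \<times> Z)) (V \<times> W)"
    using closed_nbhd_cart_times[OF assms(3)] closed_nbhd_cart_subset[OF assms(1,2) sub]
    by (rule force_steps_superset)
  with sub show ?thesis unfolding power_dominating_set_def by blast
qed

lemma power_domination_number_cart_le:
  assumes "graph V E" and "graph W F"
  shows "power_domination_number (V \<times> W) (cart_edges E F)
           \<le> domination_number V E * zero_forcing_number W F"
proof -
  have "dominating_set V E V"
    using assms(1) unfolding graph_def dominating_set_def closed_nbhd_def by auto
  then obtain D where D: "dominating_set V E D" "card D = domination_number V E"
    using card_LEAST_attained[of "dominating_set V E"] unfolding domination_number_def by blast
  have "zero_forcing_set W F W" unfolding zero_forcing_set_def by simp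
  then obtain Z where Z: "zero_forcing_set W F Z" "card Z = zero_forcing_number W F"
    using card_LEAST_attained[of "zero_forcing_set W F"] unfolding zero_forcing_number_def by blast
  have "power_domination_number (V \<times> W) (cart_edges E F) \<le> card (D \<times> Z)"
    unfolding power_domination_number_def
    by (rule LEAST_card_le, rule power_dominating_set_cart_times[OF assms D(1) Z(1)])
  also have "card (D \<times> Z) = domination_number V E * zero_forcing_number W F"
    using D(2) Z(2) by (simp add: card_cartesian_product)
  finally show ?thesis .
qed

theorem lemma3p8:
  fixes V :: "'a set" and E :: "'a \<Rightarrow> 'a \<Rightarrow> bool"
    and W :: "'b set" and F :: "'b \<Rightarrow> 'b \<Rightarrow> bool"
  assumes "graph V E" and "connected_graph V E"
    and "graph W F" and "connected_graph W F"
  shows "power_domination_number (V \<times> W) (cart_edges E F)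
           \<le> min (domination_number V E * zero_forcing_number W F)
                 (domination_number W F * zero_forcing_number V E)"
  using power_domination_number_cart_le[OF assms(1,3)]
    power_domination_number_cart_le[OF assms(3,1)]
    power_domination_number_cart_commute[OF assms(1,3)]
  by simp

end
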